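(* Under the standing assumptions for the $M=1$ system (see context), the following identities hold for all $s>0$: (i) $\xi_1=\eta_0-e_1$; (ii) $x_0y_0+x_1y_1=0$; (iii) $\eta_1+\xi_0=e_2$; (iv) $s\,x_0y_1=-\eta_0\xi_1+\eta_0+\xi_0-\eta_1-e_2$; (v) $\eta_0x_0y_0+(\eta_1-\xi_0-s)x_0y_1+x_1y_0-\xi_1x_1y_1+\eta_0=0$.
   Context: Fix complex parameters $\nu_0,\nu_1$ and put $e_1=\nu_0+\nu_1$, $e_2=\nu_0\nu_1$. Let $x_0,x_1,y_0,y_1,\xi_0,\xi_1,\eta_0,\eta_1$ be smooth complex-valued functions of $s\in(0,\infty)$ satisfying, with $'=d/ds$, the system $s x_0'=-\eta_0x_0-x_1$, $s x_1'=-\eta_1x_0+sx_0+\xi_0x_0+\xi_1x_1$, $s y_1'=-\xi_1y_1+y_0$, $s y_0'=-\xi_0y_1-sy_1+\eta_0y_0+\eta_1y_1$, $\xi_0'=x_0y_0$, $\xi_1'=x_0y_1$, $\eta_0'=x_0y_1$, $\eta_1'=x_1y_1$, together with the boundary behaviour as $s\to0^+$: $\xi_0\to e_2$, $\xi_1\to-e_1$, $\eta_0\to0$, $\eta_1\to0$, and $x_j(s)y_k(s)\to0$ for all $j,k\in\{0,1\}$. (These are the variables of Strahov's Hamiltonian system describing the gap probability of the $M=1$ hard-edge kernel on $(0,s)$, with Hamiltonian $H=-\eta_0x_0y_0+(\xi_0-\eta_1+s)x_0y_1-x_1y_0+\xi_1x_1y_1$ and gap probability $\exp\int_0^s\eta_0(t)\,dt/t$.)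 *)

theory Defs
  imports "HOL-Analysis.Analysis"
begin

end

theory Submission
  imports Defs
begin

text \<open>Each identity says that some polynomial in the unknowns (and in \<open>s\<close>) is a first integral
  of the system on \<open>(0, \<infinity>)\<close>: its derivative vanishes there, so it is constant and equals its
  limit at \<open>0\<^sup>+\<close>, which the boundary behaviour determines.\<close>

lemma eq_right_limit_if_derivative_zero:
  fixes f :: "real \<Rightarrow> 'a::real_normed_vector"
  assumes "\<And>s. s > a \<Longrightarrow> (f has_vector_derivative 0) (at s)"
    and "(f \<longlongrightarrow> L) (at_right a)" and "t > a"
  shows "f t = L"
proof -
  obtain c where c: "\<And>s. s \<in> {a<..} \<Longrightarrow> f s = c"
    by (rule has_vector_derivative_zero_constant[of "{a<..}" f])
       (auto intro: has_vector_derivative_at_within assms(1))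
  have "eventually (\<lambda>s. f s = c) (at_right a)"
    by (rule eventually_mono[OF eventually_at_right_less]) (simp add: c)
  with assms(2) have "((\<lambda>s. c) \<longlongrightarrow> L) (at_right a)"
    using tendsto_cong by force
  then have "c = L" by (simp add: tendsto_const_iff)
  with c assms(3) show ?thesis by simp
qed

lemma has_vector_derivative_of_real_ident:
  "(of_real has_vector_derivative (1 :: 'a :: real_normed_algebra_1)) F"
  using has_vector_derivative_of_real[OF DERIV_ident, of F] by (simp add: o_def)

locale strahov_hard_edge_system =
  fixes e1 e2 :: complex
    and x0 x1 y0 y1 \<xi>0 \<xi>1 \<eta>0 \<eta>1 :: "real \<Rightarrow> complex"
  assumes dx0: "\<And>s. s > 0 \<Longrightarrow> (x0 has_vector_derivative
        ((- \<eta>0 s * x0 s - x1 s) / of_real s)) (at s)"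
    and dx1: "\<And>s. s > 0 \<Longrightarrow> (x1 has_vector_derivative
        ((- \<eta>1 s * x0 s + of_real s * x0 s + \<xi>0 s * x0 s + \<xi>1 s * x1 s) / of_real s)) (at s)"
    and dy1: "\<And>s. s > 0 \<Longrightarrow> (y1 has_vector_derivative
        ((- \<xi>1 s * y1 s + y0 s) / of_real s)) (at s)"
    and dy0: "\<And>s. s > 0 \<Longrightarrow> (y0 has_vector_derivative
        ((- \<xi>0 s * y1 s - of_real s * y1 s + \<eta>0 s * y0 s + \<eta>1 s * y1 s) / of_real s)) (at s)"
    and d\<xi>0: "\<And>s. s > 0 \<Longrightarrow> (\<xi>0 has_vector_derivative (x0 s * y0 s)) (at s)"
    and d\<xi>1: "\<And>s. s > 0 \<Longrightarrow> (\<xi>1 has_vector_derivative (x0 s * y1 s)) (at s)"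
    and d\<eta>0: "\<And>s. s > 0 \<Longrightarrow> (\<eta>0 has_vector_derivative (x0 s * y1 s)) (at s)"
    and d\<eta>1: "\<And>s. s > 0 \<Longrightarrow> (\<eta>1 has_vector_derivative (x1 s * y1 s)) (at s)"
    and lim\<xi>0: "(\<xi>0 \<longlongrightarrow> e2) (at_right 0)"
    and lim\<xi>1: "(\<xi>1 \<longlongrightarrow> - e1) (at_right 0)"
    and lim\<eta>0: "(\<eta>0 \<longlongrightarrow> 0) (at_right 0)"
    and lim\<eta>1: "(\<eta>1 \<longlongrightarrow> 0) (at_right 0)"
    and lim00: "((\<lambda>s. x0 s * y0 s) \<longlongrightarrow> 0) (at_right 0)"
    and lim01: "((\<lambda>s. x0 s * y1 s) \<longlongrightarrow> 0) (at_right 0)"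
    and lim10: "((\<lambda>s. x1 s * y0 s) \<longlongrightarrow> 0) (at_right 0)"
    and lim11: "((\<lambda>s. x1 s * y1 s) \<longlongrightarrow> 0) (at_right 0)"
begin

lemma has_vector_derivative_x0_y0:
  assumes "s > 0"
  shows "((\<lambda>s. x0 s * y0 s) has_vector_derivative
    ((\<eta>1 s - \<xi>0 s - of_real s) * x0 s * y1 s - x1 s * y0 s) / of_real s) (at s)"
  by (rule has_vector_derivative_eq_rhs[OF has_vector_derivative_mult[OF dx0[OF assms] dy0[OF assms]]])
    (simp add: add_divide_distrib diff_divide_distrib algebra_simps)

lemma has_vector_derivative_x0_y1:
  assumes "s > 0"
  shows "((\<lambda>s. x0 s * y1 s) has_vector_derivative
    (x0 s * y0 s - x1 s * y1 s - (\<xi>1 s + \<eta>0 s) * x0 s * y1 s) / of_real s) (at s)"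
  by (rule has_vector_derivative_eq_rhs[OF has_vector_derivative_mult[OF dx0[OF assms] dy1[OF assms]]])
    (simp add: add_divide_distrib diff_divide_distrib algebra_simps)

lemma has_vector_derivative_x1_y0:
  assumes "s > 0"
  shows "((\<lambda>s. x1 s * y0 s) has_vector_derivative
    ((\<eta>1 s - \<xi>0 s - of_real s) * (x1 s * y1 s - x0 s * y0 s)
     + (\<xi>1 s + \<eta>0 s) * x1 s * y0 s) / of_real s) (at s)"
  by (rule has_vector_derivative_eq_rhs[OF has_vector_derivative_mult[OF dx1[OF assms] dy0[OF assms]]])
    (simp add: add_divide_distrib diff_divide_distrib algebra_simps)

lemma has_vector_derivative_x1_y1:
  assumes "s > 0"
  shows "((\<lambda>s. x1 s * y1 s) has_vector_derivative
    (x1 s * y0 s - (\<eta>1 s - \<xi>0 s - of_real s) * x0 s * y1 s) / of_real s) (at s)"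
  by (rule has_vector_derivative_eq_rhs[OF has_vector_derivative_mult[OF dx1[OF assms] dy1[OF assms]]])
    (simp add: add_divide_distrib diff_divide_distrib algebra_simps)

lemma xi1_eq_eta0_minus_e1:
  assumes "s > 0"
  shows "\<xi>1 s = \<eta>0 s - e1"
proof -
  have "\<xi>1 s - \<eta>0 s = - e1"
  proof (rule eq_right_limit_if_derivative_zero[OF _ _ assms])
    show "((\<lambda>s. \<xi>1 s - \<eta>0 s) has_vector_derivative 0) (at s)" if "s > 0" for s
      using has_vector_derivative_diff[OF d\<xi>1 d\<eta>0, OF that that] by simp
    show "((\<lambda>s. \<xi>1 s - \<eta>0 s) \<longlongrightarrow> - e1) (at_right 0)"
      using tendsto_diff[OF lim\<xi>1 lim\<eta>0] by simp
  qed
  then show ?thesis by (simp add: algebra_simps)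
qed

lemma x0_y0_plus_x1_y1_eq_0: "s > 0 \<Longrightarrow> x0 s * y0 s + x1 s * y1 s = 0"
proof (rule eq_right_limit_if_derivative_zero)
  show "((\<lambda>s. x0 s * y0 s + x1 s * y1 s) has_vector_derivative 0) (at s)" if "s > 0" for s
    by (rule has_vector_derivative_eq_rhs[OF has_vector_derivative_add[OF
          has_vector_derivative_x0_y0[OF that] has_vector_derivative_x1_y1[OF that]]])
      (simp add: add_divide_distrib diff_divide_distrib algebra_simps)
  show "((\<lambda>s. x0 s * y0 s + x1 s * y1 s) \<longlongrightarrow> 0) (at_right 0)"
    using tendsto_add[OF lim00 lim11] by simp
qed

lemma eta1_plus_xi0_eq_e2: "s > 0 \<Longrightarrow> \<eta>1 s + \<xi>0 s = e2"
proof (rule eq_right_limit_if_derivative_zero)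
  show "((\<lambda>s. \<eta>1 s + \<xi>0 s) has_vector_derivative 0) (at s)" if "s > 0" for s
    using has_vector_derivative_add[OF d\<eta>1 d\<xi>0, OF that that] x0_y0_plus_x1_y1_eq_0[OF that]
    by (simp add: add.commute)
  show "((\<lambda>s. \<eta>1 s + \<xi>0 s) \<longlongrightarrow> e2) (at_right 0)"
    using tendsto_add[OF lim\<eta>1 lim\<xi>0] by simp
qed

lemma of_real_s_x0_y1_eq:
  assumes "s > 0"
  shows "of_real s * x0 s * y1 s = - \<eta>0 s * \<xi>1 s + \<eta>0 s + \<xi>0 s - \<eta>1 s - e2"
proof -
  let ?I = "\<lambda>s. of_real s * (x0 s * y1 s) + \<eta>0 s * \<xi>1 s - \<eta>0 s - \<xi>0 s + \<eta>1 s"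
  have "?I s = - e2"
  proof (rule eq_right_limit_if_derivative_zero[OF _ _ assms])
    show "(?I has_vector_derivative 0) (at s)" if "s > 0" for s
      by (rule derivative_eq_intros has_vector_derivative_of_real_ident
            has_vector_derivative_x0_y1 d\<eta>0 d\<xi>1 d\<xi>0 d\<eta>1 that refl)+
         (use that in \<open>simp add: field_simps\<close>)
    have "(?I \<longlongrightarrow> 0 * 0 + 0 * - e1 - 0 - e2 + 0) (at_right 0)"
      by (intro tendsto_intros lim01 lim\<eta>0 lim\<xi>1 lim\<xi>0 lim\<eta>1)
         (auto intro: tendsto_eq_intros tendsto_ident_at)
    then show "(?I \<longlongrightarrow> - e2) (at_right 0)" by simp
  qed
  then show ?thesis by (simp add: algebra_simps)
qed

definition hamiltonian :: "real \<Rightarrow> complex" where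
  "hamiltonian s = - \<eta>0 s * (x0 s * y0 s) + (\<xi>0 s - \<eta>1 s + of_real s) * (x0 s * y1 s)
    - x1 s * y0 s + \<xi>1 s * (x1 s * y1 s)"

lemma hamiltonian_eq_eta0:
  assumes "s > 0"
  shows "hamiltonian s = \<eta>0 s"
proof -
  have "hamiltonian s - \<eta>0 s = 0"
  proof (rule eq_right_limit_if_derivative_zero[OF _ _ assms])
    show "((\<lambda>s. hamiltonian s - \<eta>0 s) has_vector_derivative 0) (at s)" if "s > 0" for s
      unfolding hamiltonian_def
      by (rule derivative_eq_intros has_vector_derivative_of_real_ident
            has_vector_derivative_x0_y0 has_vector_derivative_x0_y1
            has_vector_derivative_x1_y0 has_vector_derivative_x1_y1
            d\<eta>0 d\<xi>1 d\<xi>0 d\<eta>1 that refl)+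
         (use that in \<open>simp add: field_simps\<close>)
    have "((\<lambda>s. hamiltonian s - \<eta>0 s) \<longlongrightarrow>
        - 0 * 0 + (e2 - 0 + 0) * 0 - 0 + - e1 * 0 - 0) (at_right 0)"
      unfolding hamiltonian_def
      by (intro tendsto_intros lim00 lim01 lim10 lim11 lim\<eta>0 lim\<xi>1 lim\<xi>0 lim\<eta>1)
         (auto intro: tendsto_eq_intros tendsto_ident_at)
    then show "((\<lambda>s. hamiltonian s - \<eta>0 s) \<longlongrightarrow> 0) (at_right 0)" by simp
  qed
  then show ?thesis by simp
qed

end

theorem mainTheorem1:
  fixes \<nu>0 \<nu>1 e1 e2 :: complex
    and x0 x1 y0 y1 \<xi>0 \<xi>1 \<eta>0 \<eta>1 :: "real \<Rightarrow> complex"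
  assumes e1_def: "e1 = \<nu>0 + \<nu>1"
    and e2_def: "e2 = \<nu>0 * \<nu>1"
    and dx0: "\<And>s. s > 0 \<Longrightarrow> (x0 has_vector_derivative
        ((- \<eta>0 s * x0 s - x1 s) / of_real s)) (at s)"
    and dx1: "\<And>s. s > 0 \<Longrightarrow> (x1 has_vector_derivative
        ((- \<eta>1 s * x0 s + of_real s * x0 s + \<xi>0 s * x0 s + \<xi>1 s * x1 s) / of_real s)) (at s)"
    and dy1: "\<And>s. s > 0 \<Longrightarrow> (y1 has_vector_derivative
        ((- \<xi>1 s * y1 s + y0 s) / of_real s)) (at s)"
    and dy0: "\<And>s. s > 0 \<Longrightarrow> (y0 has_vector_derivative
        ((- \<xi>0 s * y1 s - of_real s * y1 s + \<eta>0 s * y0 s + \<eta>1 s * y1 s) / of_real s)) (at s)"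
    and d\<xi>0: "\<And>s. s > 0 \<Longrightarrow> (\<xi>0 has_vector_derivative (x0 s * y0 s)) (at s)"
    and d\<xi>1: "\<And>s. s > 0 \<Longrightarrow> (\<xi>1 has_vector_derivative (x0 s * y1 s)) (at s)"
    and d\<eta>0: "\<And>s. s > 0 \<Longrightarrow> (\<eta>0 has_vector_derivative (x0 s * y1 s)) (at s)"
    and d\<eta>1: "\<And>s. s > 0 \<Longrightarrow> (\<eta>1 has_vector_derivative (x1 s * y1 s)) (at s)"
    and lim\<xi>0: "(\<xi>0 \<longlongrightarrow> e2) (at_right 0)"
    and lim\<xi>1: "(\<xi>1 \<longlongrightarrow> - e1) (at_right 0)"
    and lim\<eta>0: "(\<eta>0 \<longlongrightarrow> 0) (at_right 0)"
    and lim\<eta>1: "(\<eta>1 \<longlongrightarrow> 0) (at_right 0)"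
    and lim00: "((\<lambda>s. x0 s * y0 s) \<longlongrightarrow> 0) (at_right 0)"
    and lim01: "((\<lambda>s. x0 s * y1 s) \<longlongrightarrow> 0) (at_right 0)"
    and lim10: "((\<lambda>s. x1 s * y0 s) \<longlongrightarrow> 0) (at_right 0)"
    and lim11: "((\<lambda>s. x1 s * y1 s) \<longlongrightarrow> 0) (at_right 0)"
  shows "\<forall>s>0. \<xi>1 s = \<eta>0 s - e1
    \<and> x0 s * y0 s + x1 s * y1 s = 0
    \<and> \<eta>1 s + \<xi>0 s = e2
    \<and> of_real s * x0 s * y1 s = - \<eta>0 s * \<xi>1 s + \<eta>0 s + \<xi>0 s - \<eta>1 s - e2
    \<and> \<eta>0 s * x0 s * y0 s + (\<eta>1 s - \<xi>0 s - of_real s) * x0 s * y1 s + x1 s * y0 s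
          - \<xi>1 s * x1 s * y1 s + \<eta>0 s = 0"
proof (intro allI impI)
  interpret strahov_hard_edge_system e1 e2 x0 x1 y0 y1 \<xi>0 \<xi>1 \<eta>0 \<eta>1
    by unfold_locales (fact assms)+
  fix s :: real
  assume "s > 0"
  with xi1_eq_eta0_minus_e1 x0_y0_plus_x1_y1_eq_0 eta1_plus_xi0_eq_e2 of_real_s_x0_y1_eq
    hamiltonian_eq_eta0
  show "\<xi>1 s = \<eta>0 s - e1
    \<and> x0 s * y0 s + x1 s * y1 s = 0
    \<and> \<eta>1 s + \<xi>0 s = e2
    \<and> of_real s * x0 s * y1 s = - \<eta>0 s * \<xi>1 s + \<eta>0 s + \<xi>0 s - \<eta>1 s - e2
    \<and> \<eta>0 s * x0 s * y0 s + (\<eta>1 s - \<xi>0 s - of_real s) * x0 s * y1 s + x1 s * y0 s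
          - \<xi>1 s * x1 s * y1 s + \<eta>0 s = 0"
    by (simp add: hamiltonian_def algebra_simps)
qed

end
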